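(* Let $h\in\mathbb N$ and $u,v\in\mathfrak S_n$ with $u<v$, and let $F$ be an $h$-flipclass of paths from $u$ to $v$. Suppose that for all $i\in[h-1]$ and all vertices $(a,i-1),(b,i+1)$ of $TS_F$, the interval $[(a,i-1),(b,i+1)]$ in the poset induced by $TS_F$, if nonempty, is a diamond (i.e. contains exactly two elements besides its endpoints). For $i\in[h-1]$ define $\bar f_i$ on the set $P^{TS_F}_h((u,0),(v,h))$ of paths of length $h$ from $(u,0)$ to $(v,h)$ in $TS_F$ by sending $((a_0,0),\dots,(a_h,h))$ to the path obtained by replacing $(a_i,i)$ with the other middle element of the diamond $[(a_{i-1},i-1),(a_{i+1},i+1)]$. Then $\bar f_i$ is well defined and the map $i_{TS_F}$ is equivariant: $i_{TS_F}(f_i(\Gamma))=\bar f_i(i_{TS_F}(\Gamma))$ for all $\Gamma\in F$ and $i\in[h-1]$.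
   Context: $\mathfrak S_n$ is the symmetric group on $[n]$, $T$ its transpositions, $\ell$ the length w.r.t. simple transpositions. The Bruhat graph $B(\mathfrak S_n)$ has an edge $x\xrightarrow{t}y$ iff $yx^{-1}=t\in T$ and $\ell(x)<\ell(y)$; Bruhat order: $x\le y$ iff there is a directed path from $x$ to $y$. $P_h(u,v)$ is the set of paths $u=x_0\to\cdots\to x_h=v$ of length $h$. Between two fixed vertices there are $0$ or $2$ paths of length $2$, each the flip of the other; the $i$-th flip operator $f_i$ on $P_h(u,v)$ replaces $x_{i-1}\to x_i\to x_{i+1}$ by its flip; orbits of $\langle f_1,\dots,f_{h-1}\rangle$ on $P_h(u,v)$ are the $h$-flipclasses of paths from $u$ to $v$. The time-support graph $TS_F$ has vertices $(a,i)$ ($0\le i\le h$) such that some path $(x_0,\dots,x_h)\in F$ has $x_i=a$, and edges $(a,i)\xrightarrow{t}(b,i+1)$ whenever some path of $F$ contains $x_i=a\xrightarrow{t}b=x_{i+1}$; it is acyclic and induces a partial order on its vertices (reachability). The map $i_{TS_F}:F\to P^{TS_F}_h((u,0),(v,h))$ sends $(x_0,\dots,x_h)$ to $((x_0,0),\dots,(x_h,h))$. *)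

theory Defs
  imports "HOL-Combinatorics.Permutations"
begin

text \<open>Permutations of [n] = {1..n}, represented as functions nat => nat that permute {1..n}.
  Products are function composition: (x y)(k) = x (y k).\<close>

definition Sym :: "nat \<Rightarrow> (nat \<Rightarrow> nat) set" where
  "Sym n = {p. p permutes {1..n}}"

definition Transp :: "nat \<Rightarrow> (nat \<Rightarrow> nat) set" where
  "Transp n = {Transposition.transpose i j | i j. i \<in> {1..n} \<and> j \<in> {1..n} \<and> i \<noteq> j}"

definition len :: "nat \<Rightarrow> (nat \<Rightarrow> nat) \<Rightarrow> nat" where
  "len n w = (LEAST k. \<exists>ss. length ss = k \<and> set ss \<subseteq> {1..<n} \<and>
       w = foldr (\<lambda>s acc. Transposition.transpose s (Suc s) \<circ> acc) ss id)"

definition bedge :: "nat \<Rightarrow> (nat \<Rightarrow> nat) \<Rightarrow> (nat \<Rightarrow> nat) \<Rightarrow> bool" where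
  "bedge n x y \<longleftrightarrow> x \<in> Sym n \<and> y \<in> Sym n \<and> y \<circ> inv x \<in> Transp n \<and> len n x < len n y"

definition bruhat_less :: "nat \<Rightarrow> (nat \<Rightarrow> nat) \<Rightarrow> (nat \<Rightarrow> nat) \<Rightarrow> bool" where
  "bruhat_less n x y \<longleftrightarrow> (x, y) \<in> {(a, b). bedge n a b}\<^sup>+"

definition Paths :: "nat \<Rightarrow> nat \<Rightarrow> (nat \<Rightarrow> nat) \<Rightarrow> (nat \<Rightarrow> nat) \<Rightarrow> (nat \<Rightarrow> nat) list set" where
  "Paths n h u v = {p. length p = Suc h \<and> p ! 0 = u \<and> p ! h = v \<and>
       (\<forall>i<h. bedge n (p ! i) (p ! Suc i))}"

definition flip :: "nat \<Rightarrow> nat \<Rightarrow> (nat \<Rightarrow> nat) list \<Rightarrow> (nat \<Rightarrow> nat) list" where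
  "flip n i p = p[i := (THE z. z \<noteq> p ! i \<and> bedge n (p ! (i - 1)) z \<and> bedge n z (p ! Suc i))]"

definition flip_step :: "nat \<Rightarrow> nat \<Rightarrow> (nat \<Rightarrow> nat) \<Rightarrow> (nat \<Rightarrow> nat) \<Rightarrow>
    ((nat \<Rightarrow> nat) list \<times> (nat \<Rightarrow> nat) list) set" where
  "flip_step n h u v = {(p, flip n i p) | p i. p \<in> Paths n h u v \<and> i \<in> {1..h-1}}"

text \<open>h-flipclasses: orbits of the group generated by the (involutive) flips f_1..f_{h-1}.\<close>
definition flipclass :: "nat \<Rightarrow> nat \<Rightarrow> (nat \<Rightarrow> nat) \<Rightarrow> (nat \<Rightarrow> nat) \<Rightarrow>
    (nat \<Rightarrow> nat) list set \<Rightarrow> bool" where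
  "flipclass n h u v F \<longleftrightarrow>
     (\<exists>p \<in> Paths n h u v. F = {q. (p, q) \<in> (flip_step n h u v)\<^sup>*})"

definition TSV :: "nat \<Rightarrow> (nat \<Rightarrow> nat) list set \<Rightarrow> ((nat \<Rightarrow> nat) \<times> nat) set" where
  "TSV h F = {(p ! i, i) | p i. p \<in> F \<and> i \<le> h}"

definition TSE :: "nat \<Rightarrow> (nat \<Rightarrow> nat) list set \<Rightarrow>
    (((nat \<Rightarrow> nat) \<times> nat) \<times> ((nat \<Rightarrow> nat) \<times> nat)) set" where
  "TSE h F = {((p ! i, i), (p ! Suc i, Suc i)) | p i. p \<in> F \<and> i < h}"

definition TS_le :: "nat \<Rightarrow> (nat \<Rightarrow> nat) list set \<Rightarrow> (nat \<Rightarrow> nat) \<times> nat \<Rightarrow> (nat \<Rightarrow> nat) \<times> nat \<Rightarrow> bool" where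
  "TS_le h F A B \<longleftrightarrow> A \<in> TSV h F \<and> B \<in> TSV h F \<and> (A, B) \<in> (TSE h F)\<^sup>*"

definition TS_interval :: "nat \<Rightarrow> (nat \<Rightarrow> nat) list set \<Rightarrow> (nat \<Rightarrow> nat) \<times> nat \<Rightarrow> (nat \<Rightarrow> nat) \<times> nat
    \<Rightarrow> ((nat \<Rightarrow> nat) \<times> nat) set" where
  "TS_interval h F A B = {X. TS_le h F A X \<and> TS_le h F X B}"

definition TSPaths :: "nat \<Rightarrow> (nat \<Rightarrow> nat) list set \<Rightarrow> (nat \<Rightarrow> nat) \<Rightarrow> (nat \<Rightarrow> nat) \<Rightarrow>
    ((nat \<Rightarrow> nat) \<times> nat) list set" where
  "TSPaths h F u v = {Q. length Q = Suc h \<and> Q ! 0 = (u, 0) \<and> Q ! h = (v, h) \<and>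
       (\<forall>i<h. (Q ! i, Q ! Suc i) \<in> TSE h F)}"

definition other_mid :: "nat \<Rightarrow> (nat \<Rightarrow> nat) list set \<Rightarrow> nat \<Rightarrow> ((nat \<Rightarrow> nat) \<times> nat) list
    \<Rightarrow> (nat \<Rightarrow> nat) \<times> nat \<Rightarrow> bool" where
  "other_mid h F i Q z \<longleftrightarrow> z \<in> TS_interval h F (Q ! (i - 1)) (Q ! Suc i) \<and>
       z \<noteq> Q ! (i - 1) \<and> z \<noteq> Q ! Suc i \<and> z \<noteq> Q ! i"

definition fbar :: "nat \<Rightarrow> (nat \<Rightarrow> nat) list set \<Rightarrow> nat \<Rightarrow> ((nat \<Rightarrow> nat) \<times> nat) list
    \<Rightarrow> ((nat \<Rightarrow> nat) \<times> nat) list" where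
  "fbar h F i Q = Q[i := (THE z. other_mid h F i Q z)]"

definition iTS :: "(nat \<Rightarrow> nat) list \<Rightarrow> ((nat \<Rightarrow> nat) \<times> nat) list" where
  "iTS p = zip p [0..<length p]"

end

(*
  Both statements rest on the diamond property of the Bruhat graph of S_n: for every path
  x -> z -> y of length two there is exactly one other middle vertex.  Identifying the
  Coxeter length with the number of inversions, an edge x -> y is y = (a b) x where the values
  a < b occur in increasing positions of x.  Writing y = (c d)(a b) x, every middle vertex has
  the form (e f) x where (e f) is the right factor of another factorisation of (c d)(a b) into
  two transpositions: for disjoint (a b), (c d) this leaves (c d) x, and for overlapping ones
  exactly one of two candidates is an edge pair.  Hence flips are well defined and F is a set
  of paths closed under flips.

  In the time-support graph the levels increase by one along every edge, so an element of a
  four-element interval between levels i-1 and i+1 other than the endpoints and the given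
  middle vertex sits on level i and is joined to both ends; this makes f-bar well defined.
  For Gamma in F, the flipped path f_i Gamma again lies in F, so its new middle vertex is a
  vertex of TS_F adjacent to both ends: it is exactly the element chosen by f-bar.
*)
theory Submission
  imports Defs
begin

section \<open>Coxeter length and Bruhat edges\<close>

abbreviation \<tau> :: "'a \<Rightarrow> 'a \<Rightarrow> 'a \<Rightarrow> 'a" where
  "\<tau> \<equiv> Transposition.transpose"

abbreviation word_prod :: "nat list \<Rightarrow> nat \<Rightarrow> nat" where
  "word_prod ss \<equiv> foldr (\<lambda>s acc. \<tau> s (Suc s) \<circ> acc) ss id"

definition inversions :: "nat \<Rightarrow> (nat \<Rightarrow> nat) \<Rightarrow> (nat \<times> nat) set" where
  "inversions n x = {(i, j). i \<in> {1..n} \<and> j \<in> {1..n} \<and> i < j \<and> x j < x i}"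

lemma finite_inversions: "finite (inversions n x)"
  by (rule finite_subset[of _ "{1..n} \<times> {1..n}"]) (auto simp: inversions_def)

lemma card_inversions_transpose_less:
  assumes x: "x permutes {1..n}" and ab: "a \<in> {1..n}" "b \<in> {1..n}" "a < b"
    and order: "inv x a < inv x b"
  shows "card (inversions n x) < card (inversions n (\<tau> a b \<circ> x))"
proof -
  define p q where "p = inv x a" and "q = inv x b"
  have xp: "x p = a" and xq: "x q = b"
    unfolding p_def q_def using permutes_inverses[OF x] by auto
  have pq: "p \<in> {1..n}" "q \<in> {1..n}"
    unfolding p_def q_def using ab permutes_in_image[OF permutes_inv[OF x]] by auto
  have p_less_q: "p < q"
    using order p_def q_def by simp
  have x_inj: "\<And>i j. x i = x j \<Longrightarrow> i = j"
    using permutes_inj[OF x] by (meson injD)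
  let ?y = "\<tau> a b \<circ> x"
  \<comment> \<open>An inversion of x destroyed by swapping the values a, b at positions p < q is one
      whose other value lies strictly between a and b; it is rerouted to the other position.\<close>
  define \<phi> where "\<phi> = (\<lambda>(i::nat, j::nat). if j = p \<and> a < x i \<and> x i < b then (i, q)
      else if i = q \<and> a < x j \<and> x j < b then (p, j) else (i, j))"
  have pos: "\<And>k. x k = a \<longleftrightarrow> k = p" "\<And>k. x k = b \<longleftrightarrow> k = q"
    using x_inj xp xq by auto
  have maps: "\<phi> ` inversions n x \<subseteq> inversions n ?y - {(p, q)}"
  proof
    fix z assume "z \<in> \<phi> ` inversions n x"
    then obtain i j where ij: "(i, j) \<in> inversions n x" and z: "z = \<phi> (i, j)"
      by auto
    have ij': "i \<in> {1..n}" "j \<in> {1..n}" "i < j" "x j < x i"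
      using ij by (auto simp: inversions_def)
    show "z \<in> inversions n ?y - {(p, q)}"
      using ij' p_less_q pq ab pos[of i] pos[of j] xp xq unfolding z \<phi>_def inversions_def
      by (auto simp: transpose_def split: if_splits)
  qed
  have inj: "inj_on \<phi> (inversions n x)"
  proof (rule inj_onI)
    fix z1 z2 assume z1: "z1 \<in> inversions n x" and z2: "z2 \<in> inversions n x"
      and eq: "\<phi> z1 = \<phi> z2"
    obtain i j where [simp]: "z1 = (i, j)" by (cases z1)
    obtain k l where [simp]: "z2 = (k, l)" by (cases z2)
    show "z1 = z2"
      using z1 z2 eq p_less_q pos[of i] pos[of j] pos[of k] pos[of l]
      unfolding \<phi>_def inversions_def by (auto split: if_splits)
  qed
  have "card (inversions n x) \<le> card (inversions n ?y - {(p, q)})"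
    by (rule card_inj_on_le[OF inj maps]) (simp add: finite_inversions)
  moreover have "(p, q) \<in> inversions n ?y"
    using pq p_less_q xp xq ab by (auto simp: inversions_def)
  ultimately show ?thesis
    using finite_inversions[of n ?y] by (metis card_Diff1_less le_less_trans)
qed

lemma card_inversions_adjacent_transpose_le:
  assumes y: "y permutes {1..n}"
  shows "card (inversions n (\<tau> s (Suc s) \<circ> y)) \<le> Suc (card (inversions n y))"
proof -
  have "inversions n (\<tau> s (Suc s) \<circ> y) \<subseteq> insert (inv y s, inv y (Suc s)) (inversions n y)"
  proof
    fix z assume z: "z \<in> inversions n (\<tau> s (Suc s) \<circ> y)"
    then obtain i j where ij: "z = (i, j)" "i \<in> {1..n}" "j \<in> {1..n}" "i < j"
      and inv_ij: "\<tau> s (Suc s) (y j) < \<tau> s (Suc s) (y i)"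
      by (auto simp: inversions_def)
    have "y i \<noteq> y j"
      using permutes_inj[OF y] ij(4) by (metis injD less_irrefl)
    then consider "y i = s" "y j = Suc s" | "y j < y i"
      using inv_ij by (auto simp: transpose_def split: if_splits)
    then show "z \<in> insert (inv y s, inv y (Suc s)) (inversions n y)"
    proof cases
      case 1
      then have "(i, j) = (inv y s, inv y (Suc s))"
        using permutes_inverses(2)[OF y, of i] permutes_inverses(2)[OF y, of j] by simp
      then show ?thesis using ij(1) by simp
    next
      case 2
      then show ?thesis using ij by (auto simp: inversions_def)
    qed
  qed
  then have "card (inversions n (\<tau> s (Suc s) \<circ> y))
      \<le> card (insert (inv y s, inv y (Suc s)) (inversions n y))"
    by (intro card_mono) (auto simp: finite_inversions)
  also have "\<dots> \<le> Suc (card (inversions n y))"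
    by (simp add: card_insert_if finite_inversions)
  finally show ?thesis .
qed

lemma word_prod_permutes: "set ss \<subseteq> {1..<n} \<Longrightarrow> word_prod ss permutes {1..n}"
  by (induction ss) (auto intro!: permutes_compose permutes_swap_id permutes_id)

lemma card_inversions_word_prod_le:
  "set ss \<subseteq> {1..<n} \<Longrightarrow> card (inversions n (word_prod ss)) \<le> length ss"
proof (induction ss)
  case Nil
  then show ?case by (auto simp: inversions_def card_eq_0_iff)
next
  case (Cons s ss)
  then have ss: "set ss \<subseteq> {1..<n}"
    by simp
  have "word_prod (s # ss) = \<tau> s (Suc s) \<circ> word_prod ss"
    by simp
  moreover have "card (inversions n (\<tau> s (Suc s) \<circ> word_prod ss))
      \<le> Suc (card (inversions n (word_prod ss)))"
    by (rule card_inversions_adjacent_transpose_le[OF word_prod_permutes[OF ss]])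
  ultimately show ?case
    using Cons.IH[OF ss] by (simp only: length_Cons)
qed

lemma permutes_eq_id_if_increasing:
  assumes P: "P permutes {1..n}" and incr: "\<And>s. s \<in> {1..<n} \<Longrightarrow> P s < P (Suc s)"
  shows "P = id"
proof
  have ge: "k \<le> P k" if "k \<in> {1..n}" for k
    using that
  proof (induction k)
    case (Suc k)
    then show ?case
      using incr[of k] permutes_in_image[OF P, of "Suc k"] by (cases "k = 0") auto
  qed simp
  have "sum P {1..n} = sum id {1..n}"
    using sum.reindex_bij_betw[OF permutes_imp_bij[OF P], of id] by simp
  then have "P k = k" if "k \<in> {1..n}" for k
    using sum_mono_inv[of id "{1..n}" P k] ge that by auto
  then show "P k = id k" for k
    using permutes_not_in[OF P] by (cases "k \<in> {1..n}") auto
qed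

lemma exists_left_descent:
  assumes x: "x permutes {1..n}" and "x \<noteq> id"
  shows "\<exists>s \<in> {1..<n}. inv x (Suc s) < inv x s"
proof (rule ccontr)
  assume "\<not> ?thesis"
  then have "inv x s < inv x (Suc s)" if "s \<in> {1..<n}" for s
    using that permutes_inj[OF permutes_inv[OF x]] by (metis injD n_not_Suc_n nat_neq_iff)
  then have "inv x = id"
    by (rule permutes_eq_id_if_increasing[OF permutes_inv[OF x]])
  then show False
    using \<open>x \<noteq> id\<close> by (metis inv_id inv_inv_eq permutes_bij[OF x])
qed

lemma exists_word_prod_length_le_card_inversions:
  "x permutes {1..n} \<Longrightarrow>
    \<exists>ss. length ss \<le> card (inversions n x) \<and> set ss \<subseteq> {1..<n} \<and> x = word_prod ss"
proof (induction "card (inversions n x)" arbitrary: x rule: less_induct)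
  case less
  show ?case
  proof (cases "x = id")
    case True
    then show ?thesis by (intro exI[of _ "[]"]) auto
  next
    case False
    then obtain s where s: "s \<in> {1..<n}" "inv x (Suc s) < inv x s"
      using exists_left_descent less.prems by blast
    define y where "y = \<tau> s (Suc s) \<circ> x"
    have y: "y permutes {1..n}"
      unfolding y_def using s less.prems by (auto intro!: permutes_compose permutes_swap_id)
    have x_eq: "x = \<tau> s (Suc s) \<circ> y"
      unfolding y_def by (simp flip: comp_assoc)
    have "inv y s < inv y (Suc s)"
      unfolding y_def using s by (simp add: o_inv_distrib permutes_bij[OF less.prems])
    then have "card (inversions n y) < card (inversions n x)"
      using card_inversions_transpose_less[OF y, of s "Suc s"] s x_eq by auto
    then obtain ss where "length ss \<le> card (inversions n y)" "set ss \<subseteq> {1..<n}" "y = word_prod ss"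
      using less.hyps y by blast
    then show ?thesis
      using s x_eq \<open>card (inversions n y) < card (inversions n x)\<close>
      by (intro exI[of _ "s # ss"]) auto
  qed
qed

lemma len_eq_card_inversions:
  assumes "x \<in> Sym n"
  shows "len n x = card (inversions n x)"
proof -
  let ?is_len = "\<lambda>k. \<exists>ss. length ss = k \<and> set ss \<subseteq> {1..<n} \<and> x = word_prod ss"
  obtain ss where ss: "length ss \<le> card (inversions n x)" "set ss \<subseteq> {1..<n}" "x = word_prod ss"
    using exists_word_prod_length_le_card_inversions assms by (auto simp: Sym_def)
  then have "len n x \<le> length ss"
    unfolding len_def by (intro Least_le) blast
  moreover obtain ss' where "length ss' = len n x" "set ss' \<subseteq> {1..<n}" "x = word_prod ss'"
    using LeastI[of ?is_len "length ss"] ss unfolding len_def by blast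
  then have "card (inversions n x) \<le> len n x"
    using card_inversions_word_prod_le by metis
  ultimately show ?thesis
    using ss(1) by linarith
qed

definition left_ascent :: "(nat \<Rightarrow> nat) \<Rightarrow> nat \<Rightarrow> nat \<Rightarrow> bool" where
  "left_ascent x a b \<longleftrightarrow> (a < b \<longleftrightarrow> inv x a < inv x b)"

lemma Sym_bij: "x \<in> Sym n \<Longrightarrow> bij x"
  by (simp add: Sym_def permutes_bij)

lemma Sym_transpose_comp:
  "x \<in> Sym n \<Longrightarrow> a \<in> {1..n} \<Longrightarrow> b \<in> {1..n} \<Longrightarrow> \<tau> a b \<circ> x \<in> Sym n"
  by (auto simp: Sym_def intro!: permutes_compose permutes_swap_id)

lemma inv_transpose_comp: "bij x \<Longrightarrow> inv (\<tau> a b \<circ> x) = inv x \<circ> \<tau> a b"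
  by (simp add: o_inv_distrib)

lemma bij_inv_eq_inv_iff: "bij x \<Longrightarrow> inv x a = inv x b \<longleftrightarrow> a = b"
  by (simp add: inj_eq bij_is_inj bij_imp_bij_inv)

lemma left_ascent_commute: "bij x \<Longrightarrow> a \<noteq> b \<Longrightarrow> left_ascent x a b = left_ascent x b a"
proof -
  assume "bij x" "a \<noteq> b"
  then have "inv x a \<noteq> inv x b"
    by (simp add: bij_inv_eq_inv_iff)
  then show ?thesis
    using \<open>a \<noteq> b\<close> unfolding left_ascent_def by linarith
qed

lemma left_ascent_transpose_comp:
  "bij x \<Longrightarrow> left_ascent (\<tau> a b \<circ> x) c d \<longleftrightarrow> (c < d \<longleftrightarrow> inv x (\<tau> a b c) < inv x (\<tau> a b d))"
  by (simp add: left_ascent_def inv_transpose_comp)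

lemma len_less_transpose_comp_iff:
  assumes x: "x \<in> Sym n" and ab: "a \<in> {1..n}" "b \<in> {1..n}" "a \<noteq> b"
  shows "len n x < len n (\<tau> a b \<circ> x) \<longleftrightarrow> left_ascent x a b"
proof -
  have x_perm: "x permutes {1..n}" and x_bij: "bij x"
    using x by (auto simp: Sym_def permutes_bij)
  have lt_iff: "left_ascent x a b \<longleftrightarrow> card (inversions n x) < card (inversions n (\<tau> a b \<circ> x))"
    if ab: "a \<in> {1..n}" "b \<in> {1..n}" "a < b" for a b
  proof
    assume "left_ascent x a b"
    then show "card (inversions n x) < card (inversions n (\<tau> a b \<circ> x))"
      using card_inversions_transpose_less[OF x_perm ab] ab by (simp add: left_ascent_def)
  next
    assume more: "card (inversions n x) < card (inversions n (\<tau> a b \<circ> x))"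
    show "left_ascent x a b"
    proof (rule ccontr)
      assume "\<not> left_ascent x a b"
      moreover have "inv x a \<noteq> inv x b"
        using ab(3) by (simp add: bij_inv_eq_inv_iff[OF x_bij])
      ultimately have "inv (\<tau> a b \<circ> x) a < inv (\<tau> a b \<circ> x) b"
        using ab by (auto simp: left_ascent_def inv_transpose_comp[OF x_bij])
      then have "card (inversions n (\<tau> a b \<circ> x)) < card (inversions n (\<tau> a b \<circ> (\<tau> a b \<circ> x)))"
        using ab x_perm by (intro card_inversions_transpose_less)
          (auto intro!: permutes_compose permutes_swap_id)
      then show False
        using more by (simp flip: comp_assoc)
    qed
  qed
  have lengths: "len n x = card (inversions n x)" "len n (\<tau> a b \<circ> x) = card (inversions n (\<tau> a b \<circ> x))"
    using x Sym_transpose_comp[OF x ab(1,2)] by (simp_all add: len_eq_card_inversions)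
  show ?thesis
  proof (cases "a < b")
    case True
    then show ?thesis using lt_iff[OF ab(1,2)] lengths by simp
  next
    case False
    then show ?thesis
      using lt_iff[OF ab(2,1)] lengths ab(3) left_ascent_commute[OF x_bij ab(3)]
      by (simp add: transpose_commute)
  qed
qed

lemma bedge_iff_left_ascent:
  "bedge n x y \<longleftrightarrow> x \<in> Sym n \<and>
    (\<exists>a b. a \<in> {1..n} \<and> b \<in> {1..n} \<and> a \<noteq> b \<and> y = \<tau> a b \<circ> x \<and> left_ascent x a b)"
proof
  assume "bedge n x y"
  then have x: "x \<in> Sym n" and "y \<circ> inv x \<in> Transp n" and longer: "len n x < len n y"
    by (auto simp: bedge_def)
  then obtain a b where ab: "y \<circ> inv x = \<tau> a b" "a \<in> {1..n}" "b \<in> {1..n}" "a \<noteq> b"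
    by (auto simp: Transp_def)
  have "y = \<tau> a b \<circ> x"
    using ab(1) permutes_inv_o(2)[of x "{1..n}"] x by (metis Sym_def comp_assoc comp_id mem_Collect_eq)
  then show "x \<in> Sym n \<and>
      (\<exists>a b. a \<in> {1..n} \<and> b \<in> {1..n} \<and> a \<noteq> b \<and> y = \<tau> a b \<circ> x \<and> left_ascent x a b)"
    using x ab longer len_less_transpose_comp_iff[OF x ab(2-4)] by blast
next
  assume "x \<in> Sym n \<and>
      (\<exists>a b. a \<in> {1..n} \<and> b \<in> {1..n} \<and> a \<noteq> b \<and> y = \<tau> a b \<circ> x \<and> left_ascent x a b)"
  then obtain a b where x: "x \<in> Sym n" and ab: "a \<in> {1..n}" "b \<in> {1..n}" "a \<noteq> b"
    and y: "y = \<tau> a b \<circ> x" and asc: "left_ascent x a b"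
    by blast
  have "y \<circ> inv x = \<tau> a b"
    using y permutes_inv_o(1)[of x "{1..n}"] x by (simp add: Sym_def comp_assoc)
  then show "bedge n x y"
    using x ab y asc Sym_transpose_comp[OF x ab(1,2)] len_less_transpose_comp_iff[OF x ab]
    by (auto simp: bedge_def Transp_def)
qed

lemma bedge_transpose_comp_iff:
  assumes x: "x \<in> Sym n" and ab: "a \<in> {1..n}" "b \<in> {1..n}" "a \<noteq> b"
  shows "bedge n x (\<tau> a b \<circ> x) \<longleftrightarrow> left_ascent x a b"
proof
  assume "bedge n x (\<tau> a b \<circ> x)"
  then show "left_ascent x a b"
    using len_less_transpose_comp_iff[OF x ab] by (simp add: bedge_def)
next
  assume "left_ascent x a b"
  then show "bedge n x (\<tau> a b \<circ> x)"
    unfolding bedge_iff_left_ascent using x ab by blast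
qed

section \<open>Length-two paths in the Bruhat graph\<close>

lemma doubleton_eq_if_transpose_moves: "\<tau> g h z = w \<Longrightarrow> z \<noteq> w \<Longrightarrow> {g, h} = {z, w}"
  by (auto simp: transpose_eq_iff)

lemma transpose_eq_if_doubleton_eq: "{g, h} = {z, w} \<Longrightarrow> \<tau> g h = \<tau> z w"
  by (metis doubleton_eq_iff transpose_commute)

lemma transpose_comp_transpose_pointwise_eq_imp_mem:
  assumes ab: "a \<noteq> b" and ne: "{a, b} \<noteq> {c, d}" and ef: "e \<noteq> f"
    and eq: "\<And>z. \<tau> c d (\<tau> a b z) = \<tau> g h (\<tau> e f z)"
  shows "e \<in> {a, b, c, d}"
proof (rule ccontr)
  \<comment> \<open>A point e outside the support of the left side forces (g h) to undo (e f),
      so the product of the distinct transpositions (a b), (c d) would be the identity.\<close>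
  assume "e \<notin> {a, b, c, d}"
  then have "\<tau> g h f = e"
    using eq[of e] by simp
  then have "{g, h} = {f, e}"
    using doubleton_eq_if_transpose_moves ef by metis
  then have "\<tau> g h = \<tau> e f"
    using transpose_eq_if_doubleton_eq by (metis insert_commute)
  then have "\<tau> c d b = a"
    using eq[of a] by simp
  then have "{c, d} = {b, a}"
    using doubleton_eq_if_transpose_moves ab by metis
  then show False
    using ne by (metis insert_commute)
qed

lemma transpose_comp_transpose_eq_imp_mem:
  assumes "a \<noteq> b" "{a, b} \<noteq> {c, d}" "e \<noteq> f"
    and eq: "\<tau> c d \<circ> \<tau> a b = \<tau> g h \<circ> \<tau> e f"
  shows "e \<in> {a, b, c, d} \<and> f \<in> {a, b, c, d}"
proof -
  have "\<tau> c d (\<tau> a b z) = \<tau> g h (\<tau> e f z)" for z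
    using eq by (metis comp_apply)
  moreover have "\<tau> c d (\<tau> a b z) = \<tau> g h (\<tau> f e z)" for z
    using eq by (metis comp_apply transpose_commute)
  ultimately show ?thesis
    using transpose_comp_transpose_pointwise_eq_imp_mem[of a b c d e f g h]
      transpose_comp_transpose_pointwise_eq_imp_mem[of a b c d f e g h] assms(1-3)
    by blast
qed

lemma transpose_comp_disjoint_transpose_not_straddling:
  assumes "a \<noteq> b" "c \<noteq> d" "e \<noteq> f" "a \<notin> {c, d}" "b \<notin> {c, d}"
    and eq: "\<And>z. \<tau> c d (\<tau> a b z) = \<tau> g h (\<tau> e f z)"
    and ef: "e \<in> {a, b}" "f \<in> {c, d}"
  shows False
proof -
  define w where "w z = \<tau> c d (\<tau> a b z)" for z
  have we: "w e \<in> {a, b}" "w e \<noteq> e" and wf: "w f \<in> {c, d}" "w f \<noteq> f"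
    using ef assms(1-5) unfolding w_def by auto
  have "\<tau> g h f = w e"
    using eq[of e] unfolding w_def by simp
  then have gh: "{g, h} = {f, w e}"
    using doubleton_eq_if_transpose_moves we wf ef assms by (metis insert_iff singletonD)
  have "w f = \<tau> g h e"
    using eq[of f] unfolding w_def by simp
  also have "\<dots> = e"
    using gh we(2) assms(3) by (metis doubleton_eq_iff transpose_apply_other)
  finally show False
    using wf ef assms(4,5) by auto
qed

lemma transpose_comp_disjoint_transpose_eq_cases:
  assumes "a \<noteq> b" "c \<noteq> d" "e \<noteq> f" "a \<notin> {c, d}" "b \<notin> {c, d}"
    and eq: "\<tau> c d \<circ> \<tau> a b = \<tau> g h \<circ> \<tau> e f"
  shows "{e, f} = {a, b} \<or> {e, f} = {c, d}"
proof -
  have p: "\<tau> c d (\<tau> a b z) = \<tau> g h (\<tau> e f z)" for z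
    using eq by (metis comp_apply)
  have p': "\<tau> c d (\<tau> a b z) = \<tau> g h (\<tau> f e z)" for z
    using p by (simp add: transpose_commute)
  have "{a, b} \<noteq> {c, d}"
    using assms(4) by auto
  then have "e \<in> {a, b, c, d} \<and> f \<in> {a, b, c, d}"
    using transpose_comp_transpose_eq_imp_mem[OF assms(1) _ assms(3) eq] by blast
  moreover have "\<not> (e \<in> {a, b} \<and> f \<in> {c, d})"
    using transpose_comp_disjoint_transpose_not_straddling[OF assms(1-5) p] by blast
  moreover have "\<not> (f \<in> {a, b} \<and> e \<in> {c, d})"
    using transpose_comp_disjoint_transpose_not_straddling[of a b c d f e g h, OF assms(1,2) _ assms(4,5) p']
      assms(3) by blast
  ultimately show ?thesis
    using assms by auto
qed

lemma bij_comp_right_cancel: "bij x \<Longrightarrow> f \<circ> x = g \<circ> x \<Longrightarrow> f = g"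
  by (metis bij_is_surj comp_assoc comp_id surj_iff)

lemma transpose_comp_neq:
  "x \<in> Sym n \<Longrightarrow> \<tau> a b e \<noteq> \<tau> c d e \<Longrightarrow> \<tau> a b \<circ> x \<noteq> \<tau> c d \<circ> x"
  using bij_comp_right_cancel[OF Sym_bij] by metis

lemma bedge_length_two_middle:
  assumes "bedge n x z" "bedge n z y" "y = \<tau> c d \<circ> \<tau> a b \<circ> x"
  obtains e f g h where "z = \<tau> e f \<circ> x" "e \<noteq> f" "g \<noteq> h" "\<tau> c d \<circ> \<tau> a b = \<tau> g h \<circ> \<tau> e f"
proof -
  obtain e f where x: "x \<in> Sym n" and ef: "e \<noteq> f" "z = \<tau> e f \<circ> x"
    using assms(1) bedge_iff_left_ascent by blast
  obtain g h where gh: "g \<noteq> h" "y = \<tau> g h \<circ> z"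
    using assms(2) bedge_iff_left_ascent by blast
  have "\<tau> c d \<circ> \<tau> a b \<circ> x = \<tau> g h \<circ> \<tau> e f \<circ> x"
    using gh ef assms(3) by (simp add: comp_assoc)
  then have "\<tau> c d \<circ> \<tau> a b = \<tau> g h \<circ> \<tau> e f"
    by (rule bij_comp_right_cancel[OF Sym_bij[OF x]])
  then show ?thesis
    using ef gh that by blast
qed

lemma bedge_middle_candidates_disjoint:
  assumes "bedge n x z" "bedge n z (\<tau> c d \<circ> (\<tau> a b \<circ> x))"
    and "a \<noteq> b" "c \<noteq> d" "a \<notin> {c, d}" "b \<notin> {c, d}"
  shows "z = \<tau> a b \<circ> x \<or> z = \<tau> c d \<circ> x"
proof -
  have "\<tau> c d \<circ> (\<tau> a b \<circ> x) = \<tau> c d \<circ> \<tau> a b \<circ> x"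
    by (simp only: comp_assoc)
  then obtain e f g h where efgh: "z = \<tau> e f \<circ> x" "e \<noteq> f" "g \<noteq> h"
    "\<tau> c d \<circ> \<tau> a b = \<tau> g h \<circ> \<tau> e f"
    using bedge_length_two_middle assms(1,2) by blast
  have "{e, f} = {a, b} \<or> {e, f} = {c, d}"
    by (rule transpose_comp_disjoint_transpose_eq_cases[of a b c d e f g h])
      (use assms(3-6) efgh(2,3) efgh(4) in simp_all)
  then show ?thesis
    using efgh(1) transpose_eq_if_doubleton_eq by metis
qed

lemma bedge_unique_other_middle_disjoint:
  assumes x: "x \<in> Sym n" and ab: "a \<in> {1..n}" "b \<in> {1..n}" "a \<noteq> b"
    and cd: "c \<in> {1..n}" "d \<in> {1..n}" "c \<noteq> d" and disj: "a \<notin> {c, d}" "b \<notin> {c, d}"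
    and xz: "bedge n x (\<tau> a b \<circ> x)" and zy: "bedge n (\<tau> a b \<circ> x) (\<tau> c d \<circ> (\<tau> a b \<circ> x))"
  shows "\<exists>!z. z \<noteq> \<tau> a b \<circ> x \<and> bedge n x z \<and> bedge n z (\<tau> c d \<circ> (\<tau> a b \<circ> x))"
proof -
  let ?z = "\<tau> c d \<circ> x" and ?y = "\<tau> c d \<circ> (\<tau> a b \<circ> x)"
  have "left_ascent (\<tau> a b \<circ> x) c d \<longleftrightarrow> (c < d \<longleftrightarrow> inv x (\<tau> a b c) < inv x (\<tau> a b d))"
    by (rule left_ascent_transpose_comp[OF Sym_bij[OF x]])
  then have "left_ascent x c d"
    using zy disj bedge_transpose_comp_iff[OF Sym_transpose_comp[OF x ab(1,2)] cd(1-3)]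
    by (simp add: left_ascent_def)
  then have z: "bedge n x ?z"
    using bedge_transpose_comp_iff[OF x cd(1-3)] by simp
  have comm: "\<tau> c d \<circ> \<tau> a b = \<tau> a b \<circ> \<tau> c d"
    using disj ab(3) cd(3) by (auto simp: fun_eq_iff transpose_def)
  have zy': "bedge n ?z ?y"
  proof -
    have "?y = \<tau> a b \<circ> ?z"
      by (simp add: comp_assoc[symmetric] comm)
    moreover have "left_ascent ?z a b \<longleftrightarrow> (a < b \<longleftrightarrow> inv x (\<tau> c d a) < inv x (\<tau> c d b))"
      by (rule left_ascent_transpose_comp[OF Sym_bij[OF x]])
    then have "left_ascent ?z a b"
      using xz disj bedge_transpose_comp_iff[OF x ab(1-3)] by (simp add: left_ascent_def)
    ultimately show ?thesis
      using bedge_transpose_comp_iff[OF Sym_transpose_comp[OF x cd(1,2)] ab(1-3)] by simp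
  qed
  have other: "?z \<noteq> \<tau> a b \<circ> x"
    by (rule transpose_comp_neq[OF x, where e = a]) (use disj ab(3) in auto)
  show ?thesis
  proof (rule ex1I[of _ ?z])
    show "?z \<noteq> \<tau> a b \<circ> x \<and> bedge n x ?z \<and> bedge n ?z ?y"
      using z zy' other by simp
  next
    fix z' assume "z' \<noteq> \<tau> a b \<circ> x \<and> bedge n x z' \<and> bedge n z' ?y"
    then show "z' = ?z"
      using bedge_middle_candidates_disjoint[of n x z' c d a b] ab(3) cd(3) disj by blast
  qed
qed

lemma bedge_middle_candidates_overlapping:
  assumes "bedge n x z" "bedge n z (\<tau> b c \<circ> (\<tau> a b \<circ> x))" "a \<noteq> b" "b \<noteq> c" "a \<noteq> c"
  shows "z \<in> {\<tau> a b \<circ> x, \<tau> a c \<circ> x, \<tau> b c \<circ> x}"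
proof -
  have "\<tau> b c \<circ> (\<tau> a b \<circ> x) = \<tau> b c \<circ> \<tau> a b \<circ> x"
    by (simp only: comp_assoc)
  then obtain e f g h where efgh: "z = \<tau> e f \<circ> x" "e \<noteq> f" "g \<noteq> h"
    "\<tau> b c \<circ> \<tau> a b = \<tau> g h \<circ> \<tau> e f"
    using bedge_length_two_middle assms(1,2) by blast
  have "{a, b} \<noteq> {b, c}"
    using assms(3-5) by (auto simp: doubleton_eq_iff)
  then have "e \<in> {a, b, b, c} \<and> f \<in> {a, b, b, c}"
    by (rule transpose_comp_transpose_eq_imp_mem[OF assms(3) _ efgh(2,4)])
  then have "{e, f} = {a, b} \<or> {e, f} = {a, c} \<or> {e, f} = {b, c}"
    using efgh(2) by auto
  then have "\<tau> e f = \<tau> a b \<or> \<tau> e f = \<tau> a c \<or> \<tau> e f = \<tau> b c"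
    using transpose_eq_if_doubleton_eq[of e f] by blast
  then show ?thesis
    using efgh(1) by auto
qed

lemma bedge_two_paths_overlapping_exactly_one:
  assumes x: "x \<in> Sym n"
    and abc: "a \<in> {1..n}" "b \<in> {1..n}" "c \<in> {1..n}" "a \<noteq> b" "b \<noteq> c" "a \<noteq> c"
    and asc: "left_ascent x a b" "left_ascent (\<tau> a b \<circ> x) b c"
    and y: "y = \<tau> b c \<circ> (\<tau> a b \<circ> x)"
  shows "bedge n x (\<tau> a c \<circ> x) \<and> bedge n (\<tau> a c \<circ> x) y
    \<longleftrightarrow> \<not> (bedge n x (\<tau> b c \<circ> x) \<and> bedge n (\<tau> b c \<circ> x) y)"
proof -
  define P where "P = inv x"
  have P_inj: "P i = P j \<Longrightarrow> i = j" for i j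
    unfolding P_def using bij_inv_eq_inv_iff[OF Sym_bij[OF x]] by blast
  let ?z1 = "\<tau> a c \<circ> x" and ?z2 = "\<tau> b c \<circ> x"
  have y1: "y = \<tau> a b \<circ> ?z1" and y2: "y = \<tau> a c \<circ> ?z2"
    using abc by (auto simp: y fun_eq_iff transpose_def)
  have h1: "a < b \<longleftrightarrow> P a < P b"
    using asc(1) unfolding P_def left_ascent_def .
  have h2: "b < c \<longleftrightarrow> P a < P c"
    using asc(2) abc unfolding P_def by (simp add: left_ascent_transpose_comp[OF Sym_bij[OF x]])
  have C1: "bedge n x ?z1 \<and> bedge n ?z1 y \<longleftrightarrow> (a < c \<longleftrightarrow> P a < P c) \<and> (a < b \<longleftrightarrow> P c < P b)"
    using bedge_transpose_comp_iff[OF x abc(1,3,6)]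
      bedge_transpose_comp_iff[OF Sym_transpose_comp[OF x abc(1,3)] abc(1,2,4)] y1
      left_ascent_transpose_comp[OF Sym_bij[OF x], of a c a b] abc
    unfolding P_def left_ascent_def by simp
  have C2: "bedge n x ?z2 \<and> bedge n ?z2 y \<longleftrightarrow> (b < c \<longleftrightarrow> P b < P c) \<and> (a < c \<longleftrightarrow> P a < P b)"
    using bedge_transpose_comp_iff[OF x abc(2,3,5)]
      bedge_transpose_comp_iff[OF Sym_transpose_comp[OF x abc(2,3)] abc(1,3,6)] y2
      left_ascent_transpose_comp[OF Sym_bij[OF x], of b c a c] abc
    unfolding P_def left_ascent_def by simp
  show ?thesis
    unfolding C1 C2 using abc h1 h2 P_inj[of a b] P_inj[of b c] P_inj[of a c] by linarith
qed

lemma bedge_unique_other_middle_overlapping: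
  assumes x: "x \<in> Sym n"
    and abc: "a \<in> {1..n}" "b \<in> {1..n}" "c \<in> {1..n}" "a \<noteq> b" "b \<noteq> c" "a \<noteq> c"
    and xz: "bedge n x (\<tau> a b \<circ> x)" and zy: "bedge n (\<tau> a b \<circ> x) (\<tau> b c \<circ> (\<tau> a b \<circ> x))"
  shows "\<exists>!z. z \<noteq> \<tau> a b \<circ> x \<and> bedge n x z \<and> bedge n z (\<tau> b c \<circ> (\<tau> a b \<circ> x))"
proof -
  let ?z = "\<tau> a b \<circ> x" and ?z1 = "\<tau> a c \<circ> x" and ?z2 = "\<tau> b c \<circ> x"
    and ?y = "\<tau> b c \<circ> (\<tau> a b \<circ> x)"
  have "left_ascent x a b" "left_ascent ?z b c"
    using xz zy bedge_transpose_comp_iff[OF x abc(1,2,4)]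
      bedge_transpose_comp_iff[OF Sym_transpose_comp[OF x abc(1,2)] abc(2,3,5)] by simp_all
  then have exactly_one: "(bedge n x ?z1 \<and> bedge n ?z1 ?y) \<longleftrightarrow> \<not> (bedge n x ?z2 \<and> bedge n ?z2 ?y)"
    using bedge_two_paths_overlapping_exactly_one[OF x abc] by blast
  have "?z1 \<noteq> ?z" "?z2 \<noteq> ?z"
    using transpose_comp_neq[OF x, where e = c] abc by auto
  moreover have "z \<in> {?z, ?z1, ?z2}" if "bedge n x z" "bedge n z ?y" for z
    using bedge_middle_candidates_overlapping that abc(4-6) by blast
  ultimately show ?thesis
    using exactly_one by (cases "bedge n x ?z1 \<and> bedge n ?z1 ?y") blast+
qed

lemma bedge_two_steps_distinct_transpositions:
  assumes "bedge n x (\<tau> a b \<circ> x)" "bedge n (\<tau> a b \<circ> x) (\<tau> c d \<circ> (\<tau> a b \<circ> x))"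
  shows "{a, b} \<noteq> {c, d}"
proof
  assume "{a, b} = {c, d}"
  then have "\<tau> a b = \<tau> c d"
    by (rule transpose_eq_if_doubleton_eq)
  then have "\<tau> c d \<circ> (\<tau> a b \<circ> x) = x"
    by (simp add: comp_assoc[symmetric])
  then show False
    using assms by (simp add: bedge_def)
qed

theorem bedge_unique_other_middle:
  assumes xz: "bedge n x z" and zy: "bedge n z y"
  shows "\<exists>!z'. z' \<noteq> z \<and> bedge n x z' \<and> bedge n z' y"
proof -
  obtain a b where x: "x \<in> Sym n" and ab: "a \<in> {1..n}" "b \<in> {1..n}" "a \<noteq> b"
    and z: "z = \<tau> a b \<circ> x"
    using xz bedge_iff_left_ascent by blast
  obtain c d where cd: "c \<in> {1..n}" "d \<in> {1..n}" "c \<noteq> d" and y: "y = \<tau> c d \<circ> z"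
    using zy bedge_iff_left_ascent by blast
  have xz': "bedge n x (\<tau> a b \<circ> x)" and zy': "bedge n (\<tau> a b \<circ> x) (\<tau> c d \<circ> (\<tau> a b \<circ> x))"
    using xz zy z y by simp_all
  have ne: "{a, b} \<noteq> {c, d}"
    by (rule bedge_two_steps_distinct_transpositions[OF xz' zy'])
  show ?thesis
  proof (cases "a \<notin> {c, d} \<and> b \<notin> {c, d}")
    case True
    then show ?thesis
      unfolding y z using bedge_unique_other_middle_disjoint[OF x ab cd _ _ xz' zy'] by blast
  next
    case False
    then consider "b = c" | "b = d" | "a = c" | "a = d"
      by blast
    then show ?thesis
    proof cases
      case 1
      then have "b \<noteq> d" "a \<noteq> d"
        using ne cd(3) by auto
      then show ?thesis
        unfolding y z 1[symmetric]
        by (rule bedge_unique_other_middle_overlapping[OF x ab(1,2) cd(2) ab(3) _ _ xz'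
              zy'[unfolded 1[symmetric]]])
    next
      case 2
      then have "b \<noteq> c" "a \<noteq> c"
        using ne cd(3) by auto
      then show ?thesis
        unfolding y z 2[symmetric] transpose_commute[of c b]
        by (rule bedge_unique_other_middle_overlapping[OF x ab(1,2) cd(1) ab(3) _ _ xz'
              zy'[unfolded 2[symmetric] transpose_commute[of c b]]])
    next
      case 3
      then have "a \<noteq> d" "b \<noteq> d"
        using ne cd(3) by auto
      then show ?thesis
        unfolding y z 3[symmetric] transpose_commute[of a b]
        by (rule bedge_unique_other_middle_overlapping[OF x ab(2,1) cd(2) ab(3)[symmetric] _ _
              xz'[unfolded transpose_commute[of a b]]
              zy'[unfolded 3[symmetric] transpose_commute[of a b]]])
    next
      case 4
      then have "a \<noteq> c" "b \<noteq> c"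
        using ne cd(3) by auto
      then show ?thesis
        unfolding y z 4[symmetric] transpose_commute[of a b] transpose_commute[of c a]
        by (rule bedge_unique_other_middle_overlapping[OF x ab(2,1) cd(1) ab(3)[symmetric] _ _
              xz'[unfolded transpose_commute[of a b]]
              zy'[unfolded 4[symmetric] transpose_commute[of a b] transpose_commute[of c a]]])
    qed
  qed
qed

section \<open>Flips and flipclasses\<close>

lemma chain_list_update:
  assumes chain: "\<forall>j<h. R (xs ! j) (xs ! Suc j)" and len: "length xs = Suc h"
    and i: "0 < i" "i < h" and left: "R (xs ! (i - 1)) w" and right: "R w (xs ! Suc i)"
  shows "\<forall>j<h. R (xs[i := w] ! j) (xs[i := w] ! Suc j)"
proof (intro allI impI)
  fix j assume "j < h"
  then consider "Suc j = i" | "j = i" | "Suc j \<noteq> i" "j \<noteq> i"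
    by blast
  then show "R (xs[i := w] ! j) (xs[i := w] ! Suc j)"
  proof cases
    case 1
    then show ?thesis using left len i by (auto simp: nth_list_update)
  next
    case 2
    then show ?thesis using right len i by (auto simp: nth_list_update)
  next
    case 3
    then show ?thesis using chain \<open>j < h\<close> by simp
  qed
qed

lemma Paths_edge: "q \<in> Paths n h u v \<Longrightarrow> j < h \<Longrightarrow> bedge n (q ! j) (q ! Suc j)"
  by (simp add: Paths_def)

lemma flip_eq_list_update_other_middle:
  assumes q: "q \<in> Paths n h u v" and i: "i \<in> {1..h-1}"
  obtains w where "flip n i q = q[i := w]" "w \<noteq> q ! i"
    "bedge n (q ! (i - 1)) w" "bedge n w (q ! Suc i)"
proof -
  have "i - 1 < h" "i < h"
    using i by auto
  then have "bedge n (q ! (i - 1)) (q ! Suc (i - 1))" "bedge n (q ! i) (q ! Suc i)"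
    using Paths_edge[OF q] by blast+
  moreover have "Suc (i - 1) = i"
    using i by simp
  ultimately have unique: "\<exists>!w. w \<noteq> q ! i \<and> bedge n (q ! (i - 1)) w \<and> bedge n w (q ! Suc i)"
    using bedge_unique_other_middle by simp
  show ?thesis
    using that theI'[OF unique] unfolding flip_def by blast
qed

lemma flip_in_Paths:
  assumes q: "q \<in> Paths n h u v" and i: "i \<in> {1..h-1}"
  shows "flip n i q \<in> Paths n h u v"
proof -
  obtain w where w: "flip n i q = q[i := w]" "bedge n (q ! (i - 1)) w" "bedge n w (q ! Suc i)"
    using flip_eq_list_update_other_middle[OF q i] by blast
  have "\<forall>j<h. bedge n (q[i := w] ! j) (q[i := w] ! Suc j)"
    using q i w(2,3) by (intro chain_list_update[where xs = q]) (auto simp: Paths_def)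
  then show ?thesis
    using q i w(1) by (auto simp: Paths_def)
qed

lemma flipclass_subset_Paths:
  assumes "flipclass n h u v F"
  shows "F \<subseteq> Paths n h u v"
proof
  fix q assume "q \<in> F"
  obtain p where p: "p \<in> Paths n h u v" "F = {q. (p, q) \<in> (flip_step n h u v)\<^sup>*}"
    using assms by (auto simp: flipclass_def)
  then have "(p, q) \<in> (flip_step n h u v)\<^sup>*"
    using \<open>q \<in> F\<close> by simp
  then show "q \<in> Paths n h u v"
  proof (induction rule: rtrancl_induct)
    case base
    then show ?case using p by simp
  next
    case (step y z)
    then show ?case using flip_in_Paths by (auto simp: flip_step_def)
  qed
qed

lemma flipclass_flip_closed:
  assumes F: "flipclass n h u v F" and "q \<in> F" "i \<in> {1..h-1}"
  shows "flip n i q \<in> F"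
proof -
  obtain p where p: "F = {q. (p, q) \<in> (flip_step n h u v)\<^sup>*}"
    using F by (auto simp: flipclass_def)
  have "(q, flip n i q) \<in> flip_step n h u v"
    using flipclass_subset_Paths[OF F] assms(2,3) by (auto simp: flip_step_def)
  then show ?thesis
    using assms(2) p by (auto intro: rtrancl_into_rtrancl)
qed

section \<open>The time-support graph\<close>

lemma TSE_I: "p \<in> F \<Longrightarrow> j < h \<Longrightarrow> ((p ! j, j), (p ! Suc j, Suc j)) \<in> TSE h F"
  unfolding TSE_def by blast

lemma TSE_level: "(A, B) \<in> TSE h F \<Longrightarrow> snd B = Suc (snd A)"
  by (auto simp: TSE_def)

lemma TSE_imp_TSV: "(A, B) \<in> TSE h F \<Longrightarrow> A \<in> TSV h F \<and> B \<in> TSV h F"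
  unfolding TSE_def TSV_def by (auto intro: less_imp_le Suc_leI)

lemma TSE_relpow_level: "(A, B) \<in> (TSE h F) ^^ k \<Longrightarrow> snd B = snd A + k"
proof (induction k arbitrary: B)
  case (Suc k)
  then obtain C where "(A, C) \<in> (TSE h F) ^^ k" "(C, B) \<in> TSE h F"
    by auto
  then show ?case
    using Suc.IH TSE_level by fastforce
qed simp

lemma TSPaths_level: "Q \<in> TSPaths h F u v \<Longrightarrow> j \<le> h \<Longrightarrow> snd (Q ! j) = j"
proof (induction j)
  case 0
  then show ?case by (simp add: TSPaths_def)
next
  case (Suc j)
  then have "(Q ! j, Q ! Suc j) \<in> TSE h F"
    by (simp add: TSPaths_def)
  then show ?case
    using Suc TSE_level by fastforce
qed

lemma TSPaths_edge: "Q \<in> TSPaths h F u v \<Longrightarrow> j < h \<Longrightarrow> (Q ! j, Q ! Suc j) \<in> TSE h F"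
  by (simp add: TSPaths_def)

lemma TS_interval_inner_edges:
  assumes z: "z \<in> TS_interval h F A B" "z \<noteq> A" "z \<noteq> B"
    and level: "snd B = Suc (Suc (snd A))"
  shows "(A, z) \<in> TSE h F" "(z, B) \<in> TSE h F"
proof -
  obtain k m where k: "(A, z) \<in> (TSE h F) ^^ k" and m: "(z, B) \<in> (TSE h F) ^^ m"
    using z(1) by (auto simp: TS_interval_def TS_le_def rtrancl_power)
  have "k \<noteq> 0"
    using k z(2) by (cases k) auto
  moreover have "m \<noteq> 0"
    using m z(3) by (cases m) auto
  moreover have "snd B = snd A + k + m"
    using TSE_relpow_level[OF k] TSE_relpow_level[OF m] by simp
  ultimately have "k = 1" "m = 1"
    using level by auto
  then show "(A, z) \<in> TSE h F" "(z, B) \<in> TSE h F"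
    using k m by simp_all
qed

lemma TSPaths_other_mid_unique:
  assumes Q: "Q \<in> TSPaths h F u v" and i: "0 < i" "i < h"
    and diamond: "card (TS_interval h F (Q ! (i - 1)) (Q ! Suc i)) = 4"
  shows "\<exists>!z. other_mid h F i Q z"
proof -
  define A M B where "A = Q ! (i - 1)" and "M = Q ! i" and "B = Q ! Suc i"
  define I where "I = TS_interval h F A B"
  have "i - 1 < h"
    using i by simp
  then have "(Q ! (i - 1), Q ! Suc (i - 1)) \<in> TSE h F"
    by (rule TSPaths_edge[OF Q])
  moreover have "Suc (i - 1) = i"
    using i by simp
  ultimately have AM: "(A, M) \<in> TSE h F"
    unfolding A_def M_def by simp
  have MB: "(M, B) \<in> TSE h F"
    unfolding M_def B_def using TSPaths_edge[OF Q i(2)] .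
  have "A \<in> TSV h F" "M \<in> TSV h F" "B \<in> TSV h F"
    using TSE_imp_TSV AM MB by blast+
  moreover have "(A, M) \<in> (TSE h F)\<^sup>*" "(M, B) \<in> (TSE h F)\<^sup>*" "(A, B) \<in> (TSE h F)\<^sup>*"
    using AM MB by auto
  ultimately have "A \<in> I" "M \<in> I" "B \<in> I"
    unfolding I_def TS_interval_def TS_le_def by auto
  moreover have "snd A = i - 1" "snd M = i" "snd B = Suc i"
    unfolding A_def M_def B_def using TSPaths_level[OF Q] i by simp_all
  then have "A \<noteq> M" "A \<noteq> B" "M \<noteq> B"
    using i by auto
  moreover have "finite I"
    using diamond unfolding I_def A_def B_def by (metis card.infinite zero_neq_numeral)
  ultimately have "card (I - {A, M, B}) = 1"
    using diamond unfolding I_def A_def B_def by (simp add: card_Diff_subset)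
  then obtain z0 where z0: "I - {A, M, B} = {z0}"
    by (rule card_1_singletonE)
  have "other_mid h F i Q z \<longleftrightarrow> z \<in> I - {A, M, B}" for z
    unfolding other_mid_def I_def A_def M_def B_def by auto
  then show ?thesis
    unfolding z0 by auto
qed

lemma TSPaths_other_mid_edges:
  assumes Q: "Q \<in> TSPaths h F u v" and i: "0 < i" "i < h" and z: "other_mid h F i Q z"
  shows "(Q ! (i - 1), z) \<in> TSE h F" "(z, Q ! Suc i) \<in> TSE h F"
  using z TS_interval_inner_edges[of z h F "Q ! (i - 1)" "Q ! Suc i"]
    TSPaths_level[OF Q, of "i - 1"] TSPaths_level[OF Q, of "Suc i"] i
  by (auto simp: other_mid_def)

lemma fbar_in_TSPaths:
  assumes Q: "Q \<in> TSPaths h F u v" and i: "0 < i" "i < h" and unique: "\<exists>!z. other_mid h F i Q z"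
  shows "fbar h F i Q \<in> TSPaths h F u v"
proof -
  define z where "z = (THE z. other_mid h F i Q z)"
  have "other_mid h F i Q z"
    unfolding z_def using theI'[OF unique] .
  then have "\<forall>j<h. (Q[i := z] ! j, Q[i := z] ! Suc j) \<in> TSE h F"
    using Q i TSPaths_other_mid_edges[OF Q i]
    by (intro chain_list_update[where R = "\<lambda>A B. (A, B) \<in> TSE h F"]) (auto simp: TSPaths_def)
  then show ?thesis
    using Q i by (auto simp: TSPaths_def fbar_def z_def)
qed

lemma length_iTS [simp]: "length (iTS p) = length p"
  by (simp add: iTS_def)

lemma iTS_nth: "j < length p \<Longrightarrow> iTS p ! j = (p ! j, j)"
  by (simp add: iTS_def)

lemma iTS_list_update: "i < length p \<Longrightarrow> iTS (p[i := w]) = (iTS p)[i := (w, i)]"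
  by (rule nth_equalityI) (auto simp: iTS_def nth_list_update)

lemma iTS_in_TSPaths:
  assumes F: "flipclass n h u v F" and p: "p \<in> F"
  shows "iTS p \<in> TSPaths h F u v"
proof -
  have "p \<in> Paths n h u v"
    using flipclass_subset_Paths[OF F] p by blast
  then have len: "length p = Suc h" and ends: "p ! 0 = u" "p ! h = v"
    by (simp_all add: Paths_def)
  show ?thesis
    using TSE_I[OF p] len ends by (simp add: TSPaths_def iTS_nth)
qed

lemma iTS_flip:
  assumes F: "flipclass n h u v F" and p: "p \<in> F" and i: "i \<in> {1..h-1}"
    and unique: "\<exists>!z. other_mid h F i (iTS p) z"
  shows "iTS (flip n i p) = fbar h F i (iTS p)"
proof -
  have p_path: "p \<in> Paths n h u v"
    using flipclass_subset_Paths[OF F] p by blast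
  then have len: "length p = Suc h"
    by (simp add: Paths_def)
  obtain w where w: "flip n i p = p[i := w]" "w \<noteq> p ! i"
    using flip_eq_list_update_other_middle[OF p_path i] by blast
  have flipped: "p[i := w] \<in> F"
    using flipclass_flip_closed[OF F p i] w(1) by simp
  have "i - 1 < h" "i < h"
    using i by auto
  then have "((p[i := w] ! (i - 1), i - 1), (p[i := w] ! Suc (i - 1), Suc (i - 1))) \<in> TSE h F"
    "((p[i := w] ! i, i), (p[i := w] ! Suc i, Suc i)) \<in> TSE h F"
    using TSE_I[OF flipped] by blast+
  moreover have "Suc (i - 1) = i"
    using i by simp
  ultimately have "((p ! (i - 1), i - 1), (w, i)) \<in> TSE h F" "((w, i), (p ! Suc i, Suc i)) \<in> TSE h F"
    using len i by simp_all
  then have "other_mid h F i (iTS p) (w, i)"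
    using TSE_imp_TSV w(2) len i
    by (auto simp: other_mid_def TS_interval_def TS_le_def iTS_nth intro: rtrancl_into_rtrancl)
  then have "fbar h F i (iTS p) = (iTS p)[i := (w, i)]"
    unfolding fbar_def using the1_equality[OF unique] by simp
  then show ?thesis
    using w(1) len \<open>i < h\<close> by (simp add: iTS_list_update)
qed

lemma TSPaths_diamond:
  assumes Q: "Q \<in> TSPaths h F u v" and i: "0 < i" "i < h"
    and diamond: "\<And>a b. (a, i - 1) \<in> TSV h F \<Longrightarrow> (b, Suc i) \<in> TSV h F \<Longrightarrow>
      TS_interval h F (a, i - 1) (b, Suc i) \<noteq> {} \<Longrightarrow>
      card (TS_interval h F (a, i - 1) (b, Suc i)) = 4"
  shows "card (TS_interval h F (Q ! (i - 1)) (Q ! Suc i)) = 4"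
proof -
  have "i - 1 < h"
    using i by simp
  then have "(Q ! (i - 1), Q ! Suc (i - 1)) \<in> TSE h F"
    by (rule TSPaths_edge[OF Q])
  then have A: "Q ! (i - 1) \<in> TSV h F" and B: "Q ! Suc i \<in> TSV h F"
    using TSE_imp_TSV TSPaths_edge[OF Q i(2)] by blast+
  have "Q ! (i - 1) = (fst (Q ! (i - 1)), i - 1)" "Q ! Suc i = (fst (Q ! Suc i), Suc i)"
    using TSPaths_level[OF Q, of "i - 1"] TSPaths_level[OF Q, of "Suc i"] i
    by (metis Suc_leI diff_le_self le_trans less_imp_le prod.collapse)+
  moreover have "Q ! (i - 1) \<in> TS_interval h F (Q ! (i - 1)) (Q ! Suc i)"
    using A B \<open>(Q ! (i - 1), Q ! Suc (i - 1)) \<in> TSE h F\<close> TSPaths_edge[OF Q i(2)] i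
    by (auto simp: TS_interval_def TS_le_def)
  ultimately show ?thesis
    using diamond A B by (metis empty_iff)
qed

theorem lemma5p6:
  fixes n h :: nat and u v :: "nat \<Rightarrow> nat"
    and F :: "(nat \<Rightarrow> nat) list set"
  assumes "u \<in> Sym n" and "v \<in> Sym n"
    and "bruhat_less n u v"
    and "flipclass n h u v F"
    and diamond: "\<forall>i \<in> {1..h-1}. \<forall>a b. (a, i - 1) \<in> TSV h F \<longrightarrow> (b, Suc i) \<in> TSV h F \<longrightarrow>
          TS_interval h F (a, i - 1) (b, Suc i) \<noteq> {} \<longrightarrow>
          card (TS_interval h F (a, i - 1) (b, Suc i)) = 4"
  shows "(\<forall>Q \<in> TSPaths h F u v. \<forall>i \<in> {1..h-1}.
            (\<exists>!z. other_mid h F i Q z) \<and> fbar h F i Q \<in> TSPaths h F u v)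
       \<and> (\<forall>\<Gamma> \<in> F. \<forall>i \<in> {1..h-1}. iTS (flip n i \<Gamma>) = fbar h F i (iTS \<Gamma>))"
proof -
  have unique: "\<exists>!z. other_mid h F i Q z" if Q: "Q \<in> TSPaths h F u v" and "i \<in> {1..h-1}" for Q i
  proof -
    have i: "0 < i" "i < h"
      using that(2) by auto
    have "card (TS_interval h F (Q ! (i - 1)) (Q ! Suc i)) = 4"
      by (rule TSPaths_diamond[OF Q i]) (use diamond that(2) in blast)
    then show ?thesis
      by (rule TSPaths_other_mid_unique[OF Q i])
  qed
  show ?thesis
  proof (rule conjI; intro ballI)
    fix Q i assume Q: "Q \<in> TSPaths h F u v" and i: "i \<in> {1..h-1}"
    then show "(\<exists>!z. other_mid h F i Q z) \<and> fbar h F i Q \<in> TSPaths h F u v"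
      using unique[OF Q i] fbar_in_TSPaths[OF Q _ _ unique[OF Q i]] by auto
  next
    fix \<Gamma> i assume \<Gamma>: "\<Gamma> \<in> F" and i: "i \<in> {1..h-1}"
    show "iTS (flip n i \<Gamma>) = fbar h F i (iTS \<Gamma>)"
      by (rule iTS_flip[OF assms(4) \<Gamma> i unique[OF iTS_in_TSPaths[OF assms(4) \<Gamma>] i]])
  qed
qed

end
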